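(* Let $\mathcal{T}$ be a projective Fraïssé family of finite trees whose distinguished epimorphisms are monotone and which allows splitting edges. Let $(G_i)_{i<\omega}$ with epimorphisms $f^m_n\colon G_m\to G_n$ be a Fraïssé sequence for $\mathcal{T}$, let $\mathbb{G}=\varprojlim G_i\subseteq\prod_i G_i$ be the projective Fraïssé limit and $\pi\colon\mathbb{G}\to|\mathbb{G}|$ its topological realization. Then $\pi$ maps every point of weak coherence of $\mathbb{G}$ to a ramification point of the dendrite $|\mathbb{G}|$.
   Context: Graphs have reflexive symmetric edge relations; topological graphs carry a compact, Hausdorff, zero-dimensional, second countable topology with closed edge set; finite graphs are discrete. An epimorphism $g\colon B\to A$ of topological graphs is a continuous surjection with: $\langle a_1,a_2\rangle\in E(A)$ iff some $b_i\in g^{-1}(a_i)$ satisfy $\langle b_1,b_2\rangle\in E(B)$. Connectedness: a topological graph is disconnected if its vertex set splits into two nonempty disjoint closed sets with no edges between them. An epimorphism is monotone if all fibres are connected. A finite tree is a finite connected graph without cycles of nontrivial edges; the order $\mathrm{ord}(a)$ of a vertex is its number of neighbours other than itself (= number of components of the tree minus $a$). For a monotone epimorphism $f\colon B\to A$ of finite trees and $a\in A$ with $\mathrm{ord}(a)=n\ge3$, let $A_0,\dots,A_{n-1}$ be the components of $A\setminus\{a\}$; $a$ is a point of weak coherence of $f$, witnessed by $b$, if $b\in f^{-1}(a)$, $m=\mathrm{ord}(b)\ge n$, and there is an injection $p\colon n\to m$ such that, with $B_0,\dots,B_{m-1}$ the components of $B\setminus\{b\}$, $f^{-1}(A_i)\subseteq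 B_{p(i)}$ for all $i$. A point $x=(x_i)\in\varprojlim G_i$ is a point of weak coherence of the limit if there is $k$ such that for all $l>k$, $x_l$ is a point of weak coherence of $f^{l+1}_l$ witnessed by $x_{l+1}$. A projective Fraïssé family is a class of finite graphs with a distinguished class of epimorphisms, countably many up to isomorphism, containing identities, closed under composition, with joint projection and projective amalgamation. A Fraïssé sequence is a sequence $(G_n)$ with compatible distinguished epimorphisms $f^m_n$ such that every member of the family is the image of some $G_n$ under a distinguished epimorphism, and for every distinguished $f\colon A\to G_m$ there are $n\ge m$ and distinguished $g\colon G_n\to A$ with $f\circ g=f^n_m$; its inverse limit (edges coordinatewise) is the projective Fraïssé limit. Allowing splitting edges: for every member $G$ and nontrivial edge $\{a,b\}$, replacing it by a path $a,\ast,b$ through a new vertex gives a member, and the maps collapsing $\ast$ to $a$, resp. $b$, are distinguished. Under these hypotheses $\mathbb G$ is a prespace (edge relation an equivalence relation), $\pi$ is the quotient map onto $|\mathbb{G}|=\mathbb{G}/E(\mathbb{G})$, and $|\mathbb{G}|$ is a dendrite (compact metrizable connected locally connected space with unique arcs between points). A ramification point of a dendrite $X$ is a point $x$ with $X\setminus\{x\}$ having more than two components. *)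

theory Defs
  imports "HOL-Analysis.Analysis"
begin

type_synonym graph = "nat set \<times> (nat \<times> nat) set"

definition verts :: "graph \<Rightarrow> nat set" where "verts G = fst G"
definition edges :: "graph \<Rightarrow> (nat \<times> nat) set" where "edges G = snd G"

definition fin_graph :: "graph \<Rightarrow> bool" where
  "fin_graph G \<longleftrightarrow> finite (verts G) \<and> edges G \<subseteq> verts G \<times> verts G
     \<and> (\<forall>a\<in>verts G. (a, a) \<in> edges G) \<and> (\<forall>a b. (a, b) \<in> edges G \<longrightarrow> (b, a) \<in> edges G)"

text \<open>Epimorphism g : B \<rightarrow> A (only the values on verts B matter).\<close>
definition epi :: "graph \<Rightarrow> graph \<Rightarrow> (nat \<Rightarrow> nat) \<Rightarrow> bool" where
  "epi B A g \<longleftrightarrow> g ` verts B = verts A \<and>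
     (\<forall>a1 a2. (a1, a2) \<in> edges A \<longleftrightarrow>
        (\<exists>b1 b2. b1 \<in> verts B \<and> b2 \<in> verts B \<and> g b1 = a1 \<and> g b2 = a2 \<and> (b1, b2) \<in> edges B))"

definition connected_set :: "graph \<Rightarrow> nat set \<Rightarrow> bool" where
  "connected_set G S \<longleftrightarrow> \<not> (\<exists>P Q. P \<union> Q = S \<and> P \<inter> Q = {} \<and> P \<noteq> {} \<and> Q \<noteq> {} \<and>
      (\<forall>p\<in>P. \<forall>q\<in>Q. (p, q) \<notin> edges G))"

definition gconnected :: "graph \<Rightarrow> bool" where
  "gconnected G \<longleftrightarrow> connected_set G (verts G)"

definition comps :: "graph \<Rightarrow> nat set \<Rightarrow> nat set set" where
  "comps G S = {C. C \<subseteq> S \<and> C \<noteq> {} \<and> connected_set G C \<and>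
      (\<forall>D. C \<subseteq> D \<and> D \<subseteq> S \<and> connected_set G D \<longrightarrow> D = C)}"

definition has_cycle :: "graph \<Rightarrow> bool" where
  "has_cycle G \<longleftrightarrow> (\<exists>xs. distinct xs \<and> length xs \<ge> 3 \<and> set xs \<subseteq> verts G \<and>
      (\<forall>i. Suc i < length xs \<longrightarrow> (xs ! i, xs ! Suc i) \<in> edges G) \<and>
      (last xs, hd xs) \<in> edges G)"

definition fin_tree :: "graph \<Rightarrow> bool" where
  "fin_tree G \<longleftrightarrow> fin_graph G \<and> gconnected G \<and> \<not> has_cycle G"

definition ord :: "graph \<Rightarrow> nat \<Rightarrow> nat" where
  "ord G a = card {b \<in> verts G. b \<noteq> a \<and> (a, b) \<in> edges G}"

definition monotone_epi :: "graph \<Rightarrow> graph \<Rightarrow> (nat \<Rightarrow> nat) \<Rightarrow> bool" where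
  "monotone_epi B A f \<longleftrightarrow> epi B A f \<and>
     (\<forall>a\<in>verts A. connected_set B {b \<in> verts B. f b = a})"

definition weak_coh_pt :: "graph \<Rightarrow> graph \<Rightarrow> (nat \<Rightarrow> nat) \<Rightarrow> nat \<Rightarrow> nat \<Rightarrow> bool" where
  "weak_coh_pt B A f a b \<longleftrightarrow> a \<in> verts A \<and> ord A a \<ge> 3 \<and> b \<in> verts B \<and> f b = a \<and>
     ord B b \<ge> ord A a \<and>
     (\<exists>p. inj_on p (comps A (verts A - {a})) \<and>
          p ` comps A (verts A - {a}) \<subseteq> comps B (verts B - {b}) \<and>
          (\<forall>C \<in> comps A (verts A - {a}). {x \<in> verts B. f x \<in> C} \<subseteq> p C))"

text \<open>A family: a set of finite graphs and a set of distinguished epimorphisms,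
  given as triples (domain, codomain, map).\<close>

type_synonym family = "graph set \<times> (graph \<times> graph \<times> (nat \<Rightarrow> nat)) set"

definition distg :: "family \<Rightarrow> graph \<Rightarrow> graph \<Rightarrow> (nat \<Rightarrow> nat) \<Rightarrow> bool" where
  "distg \<F> B A f \<longleftrightarrow> (\<exists>h. (B, A, h) \<in> snd \<F> \<and> (\<forall>x\<in>verts B. h x = f x))"

definition proj_fraisse_family :: "family \<Rightarrow> bool" where
  "proj_fraisse_family \<F> \<longleftrightarrow>
     (\<forall>G\<in>fst \<F>. fin_graph G) \<and>
     (\<forall>(B, A, f)\<in>snd \<F>. B \<in> fst \<F> \<and> A \<in> fst \<F> \<and> epi B A f) \<and>
     (\<forall>G\<in>fst \<F>. distg \<F> G G id) \<and>
     (\<forall>C B A g f. distg \<F> C B g \<and> distg \<F> B A f \<longrightarrow> distg \<F> C A (f \<circ> g)) \<and>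
     (\<forall>A\<in>fst \<F>. \<forall>B\<in>fst \<F>. \<exists>C\<in>fst \<F>. \<exists>f g. distg \<F> C A f \<and> distg \<F> C B g) \<and>
     (\<forall>A B C f g. distg \<F> B A f \<and> distg \<F> C A g \<longrightarrow>
        (\<exists>D\<in>fst \<F>. \<exists>f' g'. distg \<F> D B f' \<and> distg \<F> D C g' \<and>
            (\<forall>x\<in>verts D. f (f' x) = g (g' x))))"

definition split_edge :: "graph \<Rightarrow> nat \<Rightarrow> nat \<Rightarrow> nat \<Rightarrow> graph" where
  "split_edge G a b c = (insert c (verts G),
     (edges G - {(a, b), (b, a)}) \<union> {(a, c), (c, a), (c, b), (b, c), (c, c)})"

definition allows_splitting_edges :: "family \<Rightarrow> bool" where
  "allows_splitting_edges \<F> \<longleftrightarrow>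
     (\<forall>G\<in>fst \<F>. \<forall>a b. (a, b) \<in> edges G \<and> a \<noteq> b \<longrightarrow>
        (\<exists>c. c \<notin> verts G \<and> split_edge G a b c \<in> fst \<F> \<and>
             distg \<F> (split_edge G a b c) G (\<lambda>x. if x = c then a else x) \<and>
             distg \<F> (split_edge G a b c) G (\<lambda>x. if x = c then b else x)))"

text \<open>Fraisse sequence: graphs G n and maps fs m n : G m \<rightarrow> G n for n \<le> m.\<close>
definition fraisse_sequence ::
  "family \<Rightarrow> (nat \<Rightarrow> graph) \<Rightarrow> (nat \<Rightarrow> nat \<Rightarrow> nat \<Rightarrow> nat) \<Rightarrow> bool" where
  "fraisse_sequence \<F> G fs \<longleftrightarrow>
     (\<forall>n. G n \<in> fst \<F>) \<and>
     (\<forall>n m. n \<le> m \<longrightarrow> distg \<F> (G m) (G n) (fs m n)) \<and>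
     (\<forall>n. \<forall>x\<in>verts (G n). fs n n x = x) \<and>
     (\<forall>n m k. n \<le> m \<and> m \<le> k \<longrightarrow> (\<forall>x\<in>verts (G k). fs m n (fs k m x) = fs k n x)) \<and>
     (\<forall>A\<in>fst \<F>. \<exists>n f. distg \<F> (G n) A f) \<and>
     (\<forall>m A f. A \<in> fst \<F> \<and> distg \<F> A (G m) f \<longrightarrow>
        (\<exists>n\<ge>m. \<exists>g. distg \<F> (G n) A g \<and> (\<forall>x\<in>verts (G n). f (g x) = fs n m x)))"

definition lim_pts :: "(nat \<Rightarrow> graph) \<Rightarrow> (nat \<Rightarrow> nat \<Rightarrow> nat \<Rightarrow> nat) \<Rightarrow> (nat \<Rightarrow> nat) set" where
  "lim_pts G fs = {x. (\<forall>i. x i \<in> verts (G i)) \<and> (\<forall>n m. n \<le> m \<longrightarrow> fs m n (x m) = x n)}"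

definition lim_edges :: "(nat \<Rightarrow> graph) \<Rightarrow> (nat \<Rightarrow> nat \<Rightarrow> nat \<Rightarrow> nat) \<Rightarrow> ((nat \<Rightarrow> nat) \<times> (nat \<Rightarrow> nat)) set" where
  "lim_edges G fs = {(x, y). x \<in> lim_pts G fs \<and> y \<in> lim_pts G fs \<and> (\<forall>i. (x i, y i) \<in> edges (G i))}"

definition lim_top :: "(nat \<Rightarrow> graph) \<Rightarrow> (nat \<Rightarrow> nat \<Rightarrow> nat \<Rightarrow> nat) \<Rightarrow> (nat \<Rightarrow> nat) topology" where
  "lim_top G fs = subtopology (product_topology (\<lambda>i. discrete_topology (verts (G i))) UNIV) (lim_pts G fs)"

text \<open>Quotient map onto equivalence classes of the edge relation.\<close>
definition realize :: "(nat \<Rightarrow> graph) \<Rightarrow> (nat \<Rightarrow> nat \<Rightarrow> nat \<Rightarrow> nat) \<Rightarrow> (nat \<Rightarrow> nat) \<Rightarrow> (nat \<Rightarrow> nat) set" where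
  "realize G fs x = {y. (x, y) \<in> lim_edges G fs}"

definition quotient_topology :: "'a topology \<Rightarrow> ('a \<Rightarrow> 'b) \<Rightarrow> 'b topology" where
  "quotient_topology X q = topology (\<lambda>U. U \<subseteq> q ` topspace X \<and> openin X {x \<in> topspace X. q x \<in> U})"

definition realization :: "(nat \<Rightarrow> graph) \<Rightarrow> (nat \<Rightarrow> nat \<Rightarrow> nat \<Rightarrow> nat) \<Rightarrow> (nat \<Rightarrow> nat) set topology" where
  "realization G fs = quotient_topology (lim_top G fs) (realize G fs)"

definition ramification_point :: "'a topology \<Rightarrow> 'a \<Rightarrow> bool" where
  "ramification_point X p \<longleftrightarrow> p \<in> topspace X \<and>
     (\<exists>C1 C2 C3. C1 \<in> connected_components_of (subtopology X (topspace X - {p})) \<and>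
                 C2 \<in> connected_components_of (subtopology X (topspace X - {p})) \<and>
                 C3 \<in> connected_components_of (subtopology X (topspace X - {p})) \<and>
                 C1 \<noteq> C2 \<and> C1 \<noteq> C3 \<and> C2 \<noteq> C3)"

definition weak_coh_lim :: "(nat \<Rightarrow> graph) \<Rightarrow> (nat \<Rightarrow> nat \<Rightarrow> nat \<Rightarrow> nat) \<Rightarrow> (nat \<Rightarrow> nat) \<Rightarrow> bool" where
  "weak_coh_lim G fs x \<longleftrightarrow> x \<in> lim_pts G fs \<and>
     (\<exists>k. \<forall>l>k. weak_coh_pt (G (Suc l)) (G l) (fs (Suc l) l) (x l) (x (Suc l)))"

end

theory Submission
  imports Defs
begin

text \<open>
  Let weak coherence of the limit point x hold from level n0 on. As G n0 is a tree and
  x n0 has order at least 3, three neighbours of x n0 lie in three different components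
  C0, C1, C2 of the punctured tree G n0 - x n0. Weak coherence maps every component of
  G m - x m injectively to a component of G (m+1) - x (m+1) containing its preimage, so
  each Ci propagates to a coherent sequence of components, pairwise disjoint at every level.
  A point of the limit that is not edge-related to x is, from some level on, not adjacent
  to x, and from then on it lies in the sequence of C0, in that of C1, or in the rest.
  This cuts the limit minus the edge class of x into three open sets saturated for the
  edge relation, whose images partition the dendrite minus the image of x into three open
  sets. They are nonempty because splitting the edge from x n0 to a neighbour in Ci yields
  a point of the limit lying over Ci but not adjacent to x. Splitting edges is also what
  makes the edge relation of the limit transitive, so that the realization is a quotient
  by an equivalence relation.
\<close>

section \<open>Quotient topology and ramification points\<close>

lemma openin_quotient_topology:
  "openin (quotient_topology X q) U \<longleftrightarrow> U \<subseteq> q ` topspace X \<and> openin X {x \<in> topspace X. q x \<in> U}"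
proof -
  have inter: "{x \<in> topspace X. q x \<in> S \<inter> T} = {x \<in> topspace X. q x \<in> S} \<inter> {x \<in> topspace X. q x \<in> T}"
    for S T by auto
  have union: "{x \<in> topspace X. q x \<in> \<Union>\<K>} = (\<Union>S\<in>\<K>. {x \<in> topspace X. q x \<in> S})" for \<K> by auto
  have "istopology (\<lambda>U. U \<subseteq> q ` topspace X \<and> openin X {x \<in> topspace X. q x \<in> U})"
    unfolding istopology_def inter union by blast
  then show ?thesis unfolding quotient_topology_def by simp
qed

lemma topspace_quotient_topology: "topspace (quotient_topology X q) = q ` topspace X"
proof -
  have "{x \<in> topspace X. q x \<in> q ` topspace X} = topspace X"
    by blast
  then have "openin (quotient_topology X q) (q ` topspace X)"
    by (simp add: openin_quotient_topology)
  then show ?thesis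
    using openin_subset openin_quotient_topology openin_topspace by (metis subset_antisym)
qed

lemma connected_component_of_open_separation:
  assumes "openin Y A" "openin Y B" "A \<inter> B = {}" "topspace Y \<subseteq> A \<union> B" "a \<in> A" "b \<in> B"
  shows "connected_component_of_set Y a \<noteq> connected_component_of_set Y b"
proof
  assume "connected_component_of_set Y a = connected_component_of_set Y b"
  then have "connected_component_of Y a b"
    using assms(2,6) openin_subset connected_component_of_refl by fastforce
  then obtain C where "connectedin Y C" "a \<in> C" "b \<in> C"
    unfolding connected_component_of_def by blast
  then show False
    using connectedinD[of Y C A B] connectedin_subset_topspace assms by blast
qed

lemma ramification_point_of_open_partition:
  assumes P: "P \<in> topspace X"
    and opn: "openin X U" "openin X V" "openin X W"
    and disj: "U \<inter> V = {}" "U \<inter> W = {}" "V \<inter> W = {}"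
    and ne: "U \<noteq> {}" "V \<noteq> {}" "W \<noteq> {}"
    and cov: "topspace X - {P} = U \<union> V \<union> W"
  shows "ramification_point X P"
proof -
  define Y where "Y = subtopology X (topspace X - {P})"
  define C where "C a = connected_component_of_set Y a" for a
  have topY: "topspace Y = U \<union> V \<union> W"
    using cov unfolding Y_def by (metis Diff_subset topspace_subtopology_subset)
  have opnY: "openin Y S" if "openin X S" "S \<subseteq> topspace Y" for S
    using that topY cov unfolding Y_def openin_subtopology by blast
  have sep: "C a \<noteq> C b"
    if "openin X A" "openin X B" "A \<inter> B = {}" "topspace Y = A \<union> B" "a \<in> A" "b \<in> B" for A B a b
    using that connected_component_of_open_separation[of Y A B a b] opnY unfolding C_def by simp
  obtain a0 a1 a2 where a: "a0 \<in> U" "a1 \<in> V" "a2 \<in> W"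
    using ne by blast
  have "C a0 \<noteq> C a1" "C a0 \<noteq> C a2" "C a1 \<noteq> C a2"
    using sep[of U "V \<union> W" a0 a1] sep[of U "V \<union> W" a0 a2] sep[of V "U \<union> W" a1 a2]
      opn disj a topY by (auto simp: openin_Un Un_ac)
  moreover have "C a \<in> connected_components_of Y" if "a \<in> topspace Y" for a
    using that by (simp add: C_def connected_component_in_connected_components_of)
  ultimately show ?thesis
    unfolding ramification_point_def Y_def[symmetric] using P a topY by blast
qed

section \<open>Components of finite graphs\<close>

lemma connected_setD:
  assumes "connected_set G S" "P \<union> Q = S" "P \<inter> Q = {}" "P \<noteq> {}" "Q \<noteq> {}"
  shows "\<exists>p\<in>P. \<exists>q\<in>Q. (p, q) \<in> edges G"
  using assms unfolding connected_set_def by blast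

lemma connected_set_Union:
  assumes "\<And>D. D \<in> \<K> \<Longrightarrow> connected_set G D" "\<And>D. D \<in> \<K> \<Longrightarrow> v \<in> D"
  shows "connected_set G (\<Union>\<K>)"
  unfolding connected_set_def
proof clarify
  fix P Q assume PQ: "P \<union> Q = \<Union>\<K>" "P \<inter> Q = {}" "P \<noteq> {}" "Q \<noteq> {}"
    and no_edge: "\<forall>p\<in>P. \<forall>q\<in>Q. (p, q) \<notin> edges G"
  have "D \<subseteq> P \<or> D \<subseteq> Q" if "D \<in> \<K>" for D
    using connected_setD[of G D "D \<inter> P" "D \<inter> Q"] assms(1) that PQ(1,2) no_edge by blast
  then have "\<Union>\<K> \<subseteq> P \<or> \<Union>\<K> \<subseteq> Q"
    using assms(2) PQ(2) by blast
  then show False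
    using PQ by blast
qed

lemma connected_set_singleton: "connected_set G {v}"
  unfolding connected_set_def by (auto simp: Un_singleton_iff)

lemma connected_set_edge:
  assumes "(u, v) \<in> edges G" "(v, u) \<in> edges G"
  shows "connected_set G {u, v}"
  unfolding connected_set_def
proof clarify
  fix P Q assume PQ: "P \<union> Q = {u, v}" "P \<inter> Q = {}" "P \<noteq> {}" "Q \<noteq> {}"
    and no_edge: "\<forall>p\<in>P. \<forall>q\<in>Q. (p, q) \<notin> edges G"
  then have "(u \<in> P \<and> v \<in> Q) \<or> (v \<in> P \<and> u \<in> Q)"
    by auto
  then show False
    using no_edge assms by blast
qed

lemma comps_subset: "C \<in> comps G S \<Longrightarrow> C \<subseteq> S"
  and comps_connected: "C \<in> comps G S \<Longrightarrow> connected_set G C"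
  and comps_maximal: "C \<in> comps G S \<Longrightarrow> C \<subseteq> D \<Longrightarrow> D \<subseteq> S \<Longrightarrow> connected_set G D \<Longrightarrow> D = C"
  unfolding comps_def by blast+

lemma comps_disjoint:
  assumes "C \<in> comps G S" "D \<in> comps G S" "v \<in> C" "v \<in> D"
  shows "C = D"
proof -
  have "connected_set G (\<Union>{C, D})"
    using comps_connected[OF assms(1)] comps_connected[OF assms(2)] assms(3,4)
    by (intro connected_set_Union[where v = v]) auto
  moreover have "\<Union>{C, D} \<subseteq> S"
    using assms(1,2) comps_subset by blast
  ultimately show ?thesis
    using comps_maximal[OF assms(1), of "\<Union>{C, D}"] comps_maximal[OF assms(2), of "\<Union>{C, D}"] by blast
qed

lemma comps_cover:
  assumes "v \<in> S"
  obtains C where "C \<in> comps G S" "v \<in> C"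
proof
  define \<K> where "\<K> = {D. D \<subseteq> S \<and> connected_set G D \<and> v \<in> D}"
  have "{v} \<in> \<K>"
    using assms connected_set_singleton by (simp add: \<K>_def)
  then show "v \<in> \<Union>\<K>"
    by blast
  have "connected_set G (\<Union>\<K>)"
    by (rule connected_set_Union[where v = v]) (simp_all add: \<K>_def)
  moreover have "D \<in> \<K>" if "\<Union>\<K> \<subseteq> D" "D \<subseteq> S" "connected_set G D" for D
    using that \<open>v \<in> \<Union>\<K>\<close> by (auto simp: \<K>_def)
  ultimately show "\<Union>\<K> \<in> comps G S"
    using \<open>v \<in> \<Union>\<K>\<close> unfolding comps_def by (auto simp: \<K>_def)
qed

lemma comps_edge_closed:
  assumes "C \<in> comps G S" "c \<in> C" "y \<in> S" "(c, y) \<in> edges G" "(y, c) \<in> edges G"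
  shows "y \<in> C"
proof -
  have "connected_set G (\<Union>{C, {c, y}})"
    using comps_connected[OF assms(1)] connected_set_edge[OF assms(4,5)] assms(2)
    by (intro connected_set_Union[where v = c]) auto
  moreover have "\<Union>{C, {c, y}} \<subseteq> S"
    using comps_subset[OF assms(1)] assms(2,3) by auto
  ultimately have "\<Union>{C, {c, y}} = C"
    by (intro comps_maximal[OF assms(1)]) auto
  then show ?thesis
    by auto
qed

definition simple_walk :: "graph \<Rightarrow> nat set \<Rightarrow> nat \<Rightarrow> nat \<Rightarrow> nat list \<Rightarrow> bool" where
  "simple_walk G S u w xs \<longleftrightarrow> xs \<noteq> [] \<and> hd xs = u \<and> last xs = w \<and> set xs \<subseteq> S \<and> distinct xs \<and>
     successively (\<lambda>a b. (a, b) \<in> edges G) xs"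

lemma simple_walk_snoc:
  assumes "simple_walk G S u w xs" "(w, y) \<in> edges G" "y \<in> S"
  obtains ys where "simple_walk G S u y ys"
proof (cases "y \<in> set xs")
  case True
  then obtain as bs where "xs = as @ y # bs"
    by (meson split_list)
  then have "simple_walk G S u y (as @ [y])"
    using assms(1) by (auto simp: simple_walk_def successively_append_iff successively_Cons hd_append split: if_splits)
  then show ?thesis ..
next
  case False
  then have "simple_walk G S u y (xs @ [y])"
    using assms by (auto simp: simple_walk_def successively_append_iff)
  then show ?thesis ..
qed

lemma connected_set_simple_walk:
  assumes "connected_set G S" "u \<in> S" "w \<in> S"
  obtains xs where "simple_walk G S u w xs"
proof -
  define R where "R = {v \<in> S. \<exists>xs. simple_walk G S u v xs}"
  have "u \<in> R"
    using assms(2) by (auto simp: R_def simple_walk_def intro!: exI[of _ "[u]"])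
  have "w \<in> R"
  proof (rule ccontr)
    assume "w \<notin> R"
    moreover have "R \<subseteq> S"
      by (auto simp: R_def)
    ultimately obtain p q where "p \<in> R" "q \<in> S - R" "(p, q) \<in> edges G"
      using connected_setD[OF assms(1), of R "S - R"] \<open>u \<in> R\<close> assms(3) by blast
    then show False
      using simple_walk_snoc[of G S u p _ q] by (auto simp: R_def)
  qed
  then show ?thesis
    using that by (auto simp: R_def)
qed

lemma successively_iff_nth:
  "successively P xs \<longleftrightarrow> (\<forall>i. Suc i < length xs \<longrightarrow> P (xs ! i) (xs ! Suc i))"
  by (induction P xs rule: successively.induct) (auto simp: nth_Cons split: nat.splits)

lemma fin_tree_comps_neighbour_unique:
  assumes T: "fin_tree T" and C: "C \<in> comps T (verts T - {a})"
    and uw: "u \<in> C" "w \<in> C" and e: "(a, u) \<in> edges T" "(a, w) \<in> edges T"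
  shows "u = w"
proof (rule ccontr)
  assume "u \<noteq> w"
  have graph: "fin_graph T"
    using T unfolding fin_tree_def by blast
  obtain xs where xs: "simple_walk T C u w xs"
    using connected_set_simple_walk[OF comps_connected[OF C] uw] .
  have "2 \<le> length xs"
    using xs \<open>u \<noteq> w\<close> by (cases xs rule: remdups_adj.cases) (auto simp: simple_walk_def)
  moreover have "a \<notin> set xs" "set xs \<subseteq> verts T"
    using xs comps_subset[OF C] by (auto simp: simple_walk_def)
  moreover have "a \<in> verts T" "(w, a) \<in> edges T"
    using e graph unfolding fin_graph_def by blast+
  moreover have "successively (\<lambda>a b. (a, b) \<in> edges T) (a # xs)"
    using xs e(1) by (auto simp: simple_walk_def successively_Cons)
  ultimately have "has_cycle T"
    using xs unfolding has_cycle_def simple_walk_def successively_iff_nth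
    by (intro exI[of _ "a # xs"]) auto
  then show False
    using T unfolding fin_tree_def by blast
qed

lemma three_le_cardE:
  assumes "3 \<le> card A"
  obtains a b c where "a \<in> A" "b \<in> A" "c \<in> A" "a \<noteq> b" "a \<noteq> c" "b \<noteq> c"
proof -
  obtain B where "B \<subseteq> A" "card B = 3"
    using obtain_subset_with_card_n[OF assms] by metis
  then show ?thesis
    using that unfolding card_3_iff by blast
qed

lemma fin_tree_three_comps:
  assumes T: "fin_tree T" and ord: "3 \<le> ord T a"
  obtains C0 C1 C2 u0 u1 u2 where
    "C0 \<in> comps T (verts T - {a})" "C1 \<in> comps T (verts T - {a})" "C2 \<in> comps T (verts T - {a})"
    "C0 \<noteq> C1" "C0 \<noteq> C2" "C1 \<noteq> C2"
    "u0 \<in> C0" "u1 \<in> C1" "u2 \<in> C2" "(a, u0) \<in> edges T" "(a, u1) \<in> edges T" "(a, u2) \<in> edges T"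
proof -
  obtain u0 u1 u2 where u: "u0 \<in> verts T - {a}" "u1 \<in> verts T - {a}" "u2 \<in> verts T - {a}"
    and e: "(a, u0) \<in> edges T" "(a, u1) \<in> edges T" "(a, u2) \<in> edges T"
    and distinct: "u0 \<noteq> u1" "u0 \<noteq> u2" "u1 \<noteq> u2"
    using three_le_cardE[OF ord[unfolded ord_def]] by blast
  obtain C0 C1 C2 where C: "C0 \<in> comps T (verts T - {a})" "C1 \<in> comps T (verts T - {a})"
      "C2 \<in> comps T (verts T - {a})" and uC: "u0 \<in> C0" "u1 \<in> C1" "u2 \<in> C2"
    using comps_cover[OF u(1)] comps_cover[OF u(2)] comps_cover[OF u(3)] by metis
  have "C0 \<noteq> C1" "C0 \<noteq> C2" "C1 \<noteq> C2"
    using fin_tree_comps_neighbour_unique[OF T] C uC e distinct by metis+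
  then show ?thesis
    using that C uC e by blast
qed

section \<open>Epimorphisms and split edges\<close>

lemma epi_cong:
  assumes "epi B A h" "\<And>v. v \<in> verts B \<Longrightarrow> h v = f v"
  shows "epi B A f"
proof -
  have "h ` verts B = f ` verts B"
    using assms(2) by (rule image_cong[OF refl])
  moreover have "(\<exists>b1 b2. b1 \<in> verts B \<and> b2 \<in> verts B \<and> h b1 = a1 \<and> h b2 = a2 \<and> (b1, b2) \<in> edges B) \<longleftrightarrow>
      (\<exists>b1 b2. b1 \<in> verts B \<and> b2 \<in> verts B \<and> f b1 = a1 \<and> f b2 = a2 \<and> (b1, b2) \<in> edges B)" for a1 a2
    using assms(2) by (auto 4 4)
  ultimately show ?thesis
    using assms(1) unfolding epi_def by presburger
qed

lemma distg_epi:
  assumes "proj_fraisse_family F" "distg F B A f"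
  shows "epi B A f"
proof -
  obtain h where h: "(B, A, h) \<in> snd F" "\<And>v. v \<in> verts B \<Longrightarrow> h v = f v"
    using assms(2) unfolding distg_def by blast
  have "epi B A h"
    using assms(1) h(1) unfolding proj_fraisse_family_def by fast
  then show ?thesis
    using h(2) by (rule epi_cong)
qed

lemma epi_edge:
  assumes "epi B A g" "fin_graph B" "(u, v) \<in> edges B"
  shows "(g u, g v) \<in> edges A"
proof -
  have "u \<in> verts B" "v \<in> verts B"
    using assms(2,3) unfolding fin_graph_def by blast+
  then show ?thesis
    using assms(1,3) unfolding epi_def by blast
qed

lemma epi_surj:
  assumes "epi B A g" "a \<in> verts A"
  obtains b where "b \<in> verts B" "g b = a"
  using assms unfolding epi_def by (metis imageE)

lemma verts_split_edge: "verts (split_edge G a b c) = insert c (verts G)"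
  and edges_split_edge: "edges (split_edge G a b c) =
     (edges G - {(a, b), (b, a)}) \<union> {(a, c), (c, a), (c, b), (b, c), (c, c)}"
  unfolding split_edge_def verts_def edges_def by simp_all

section \<open>The inverse limit of a Fraisse sequence of trees\<close>

locale tree_fraisse_sequence =
  fixes F :: family and G :: "nat \<Rightarrow> graph" and fs :: "nat \<Rightarrow> nat \<Rightarrow> nat \<Rightarrow> nat"
  assumes family: "proj_fraisse_family F"
    and trees: "\<forall>T\<in>fst F. fin_tree T"
    and splitting: "allows_splitting_edges F"
    and fraisse: "fraisse_sequence F G fs"
begin

abbreviation "L \<equiv> lim_pts G fs"
abbreviation "E \<equiv> lim_edges G fs"

lemma G_in_family: "G n \<in> fst F"
  and fs_distg: "n \<le> m \<Longrightarrow> distg F (G m) (G n) (fs m n)"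
  and fs_id: "v \<in> verts (G n) \<Longrightarrow> fs n n v = v"
  and fs_comp: "n \<le> m \<Longrightarrow> m \<le> k \<Longrightarrow> v \<in> verts (G k) \<Longrightarrow> fs m n (fs k m v) = fs k n v"
  using fraisse unfolding fraisse_sequence_def by simp_all

lemma fs_factors_through:
  assumes "A \<in> fst F" "distg F A (G m) f"
  obtains n g where "m \<le> n" "distg F (G n) A g" "\<And>v. v \<in> verts (G n) \<Longrightarrow> f (g v) = fs n m v"
proof -
  have "\<forall>m A f. A \<in> fst F \<and> distg F A (G m) f \<longrightarrow>
      (\<exists>n\<ge>m. \<exists>g. distg F (G n) A g \<and> (\<forall>v\<in>verts (G n). f (g v) = fs n m v))"
    using fraisse unfolding fraisse_sequence_def by (elim conjE) assumption
  then show ?thesis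
    using assms that by blast
qed

lemma fin_tree_G: "fin_tree (G n)"
  using G_in_family trees by blast

lemma fin_graph_G: "fin_graph (G n)"
  using fin_tree_G unfolding fin_tree_def by blast

lemma edges_G_verts: "(u, v) \<in> edges (G n) \<Longrightarrow> u \<in> verts (G n) \<and> v \<in> verts (G n)"
  and edges_G_refl: "u \<in> verts (G n) \<Longrightarrow> (u, u) \<in> edges (G n)"
  and edges_G_sym: "(u, v) \<in> edges (G n) \<Longrightarrow> (v, u) \<in> edges (G n)"
  using fin_graph_G[of n] unfolding fin_graph_def by blast+

lemma fs_epi: "n \<le> m \<Longrightarrow> epi (G m) (G n) (fs m n)"
  using distg_epi[OF family fs_distg] .

lemma fs_verts: "n \<le> m \<Longrightarrow> v \<in> verts (G m) \<Longrightarrow> fs m n v \<in> verts (G n)"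
  using fs_epi unfolding epi_def by (metis imageI)

lemma fs_edge: "n \<le> m \<Longrightarrow> (u, v) \<in> edges (G m) \<Longrightarrow> (fs m n u, fs m n v) \<in> edges (G n)"
  using epi_edge[OF fs_epi fin_graph_G] .

lemma lim_ptsD: "y \<in> L \<Longrightarrow> y i \<in> verts (G i)"
  and lim_pts_compat: "y \<in> L \<Longrightarrow> n \<le> m \<Longrightarrow> fs m n (y m) = y n"
  unfolding lim_pts_def by blast+

lemma lim_edges_iff: "(y, z) \<in> E \<longleftrightarrow> y \<in> L \<and> z \<in> L \<and> (\<forall>i. (y i, z i) \<in> edges (G i))"
  unfolding lim_edges_def by blast

lemma lim_edges_refl: "y \<in> L \<Longrightarrow> (y, y) \<in> E"
  by (simp add: lim_edges_iff edges_G_refl lim_ptsD)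

lemma lim_edges_sym: "(y, z) \<in> E \<Longrightarrow> (z, y) \<in> E"
  by (simp add: lim_edges_iff edges_G_sym)

lemma lim_pts_non_edge_mono:
  assumes "y \<in> L" "z \<in> L" "n \<le> m" "(y n, z n) \<notin> edges (G n)"
  shows "(y m, z m) \<notin> edges (G m)"
  using fs_edge[OF assms(3), of "y m" "z m"] lim_pts_compat[OF assms(1,3)] lim_pts_compat[OF assms(2,3)]
    assms(4) by auto

lemma lim_ptsI_consecutive:
  assumes "\<And>i. y i \<in> verts (G i)" "\<And>i. fs (Suc i) i (y (Suc i)) = y i"
  shows "y \<in> L"
proof -
  have "fs m n (y m) = y n" if "n \<le> m" for n m
    using that
  proof (induction m rule: dec_induct)
    case base
    then show ?case
      using assms(1) fs_id by blast
  next
    case (step m)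
    then show ?case
      using fs_comp[of n m "Suc m" "y (Suc m)"] assms by simp
  qed
  then show ?thesis
    using assms(1) unfolding lim_pts_def by blast
qed

lemma lim_pts_through_vertex:
  assumes v: "v \<in> verts (G n)"
  obtains y where "y \<in> L" "y n = v"
proof
  define y where "y = rec_nat (fs n 0 v) (\<lambda>m ym. if Suc m \<le> n then fs n (Suc m) v
    else SOME w. w \<in> verts (G (Suc m)) \<and> fs (Suc m) m w = ym)"
  have y: "y m \<in> verts (G m) \<and> (m \<le> n \<longrightarrow> y m = fs n m v) \<and>
      (0 < m \<longrightarrow> fs m (m - 1) (y m) = y (m - 1))" for m
  proof (induction m)
    case 0
    then show ?case
      using fs_verts v by (simp add: y_def)
  next
    case (Suc m)
    show ?case
    proof (cases "Suc m \<le> n")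
      case True
      then show ?thesis
        using Suc.IH fs_verts[OF True v] fs_comp[of m "Suc m" n v] v by (simp add: y_def)
    next
      case False
      have "\<exists>w. w \<in> verts (G (Suc m)) \<and> fs (Suc m) m w = y m"
        using Suc.IH epi_surj[OF fs_epi[of m "Suc m"]] by (metis le_SucI order_refl)
      from someI_ex[OF this] show ?thesis
        using False by (simp add: y_def)
    qed
  qed
  show "y \<in> L"
    using y by (intro lim_ptsI_consecutive) (metis diff_Suc_1 zero_less_Suc)+
  show "y n = v"
    using y fs_id v by simp
qed

lemma split_edge_factorization:
  assumes "(a, b) \<in> edges (G m)" "a \<noteq> b"
  obtains n c g where "m \<le> n" "c \<notin> verts (G m)" "epi (G n) (split_edge (G m) a b c) g"
    "\<And>v. v \<in> verts (G n) \<Longrightarrow> fs n m v = (if g v = c then b else g v)"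
proof -
  obtain c where c: "c \<notin> verts (G m)" "split_edge (G m) a b c \<in> fst F"
      "distg F (split_edge (G m) a b c) (G m) (\<lambda>v. if v = c then b else v)"
    using splitting G_in_family[of m] assms unfolding allows_splitting_edges_def by meson
  obtain n g where "m \<le> n" "distg F (G n) (split_edge (G m) a b c) g"
      "\<And>v. v \<in> verts (G n) \<Longrightarrow> (if g v = c then b else g v) = fs n m v"
    using fs_factors_through[OF c(2,3)] by metis
  then show ?thesis
    using that c(1) distg_epi[OF family] by metis
qed

lemma split_edge_detached_lift:
  assumes "(a, b) \<in> edges (G m)" "a \<noteq> b"
  obtains n v where "m \<le> n" "v \<in> verts (G n)" "fs n m v = b"
    "\<And>w. w \<in> verts (G n) \<Longrightarrow> fs n m w = a \<Longrightarrow> (w, v) \<notin> edges (G n)"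
proof -
  obtain n c g where n: "m \<le> n" and c: "c \<notin> verts (G m)"
    and g: "epi (G n) (split_edge (G m) a b c) g"
    and fs_g: "\<And>v. v \<in> verts (G n) \<Longrightarrow> fs n m v = (if g v = c then b else g v)"
    using split_edge_factorization[OF assms] by blast
  have "a \<noteq> c" "b \<noteq> c"
    using c edges_G_verts[OF assms(1)] by blast+
  obtain v where v: "v \<in> verts (G n)" "g v = b"
    using epi_surj[OF g] edges_G_verts[OF assms(1)] by (auto simp: verts_split_edge)
  have detached: "(w, v) \<notin> edges (G n)" if w: "w \<in> verts (G n)" "fs n m w = a" for w
  proof
    assume "(w, v) \<in> edges (G n)"
    then have "(g w, b) \<in> edges (split_edge (G m) a b c)"
      using epi_edge[OF g fin_graph_G] v(2) by metis
    moreover have "g w = a"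
      using fs_g[OF w(1)] w(2) assms(2) by (auto split: if_splits)
    ultimately show False
      using assms(2) \<open>a \<noteq> c\<close> \<open>b \<noteq> c\<close> by (auto simp: edges_split_edge)
  qed
  have "fs n m v = b"
    using fs_g[OF v(1)] v(2) \<open>b \<noteq> c\<close> by simp
  then show ?thesis
    using that[OF n v(1)] detached by blast
qed

text \<open>
  If p m and r m were not adjacent, split the edge from p m to q m: at a later level q lies
  over the new vertex, whose only neighbours lie over p m and q m, and so does r.
\<close>

lemma lim_edges_trans:
  assumes "(p, q) \<in> E" "(q, r) \<in> E"
  shows "(p, r) \<in> E"
proof -
  have pqr: "p \<in> L" "q \<in> L" "r \<in> L"
    and pq: "\<And>i. (p i, q i) \<in> edges (G i)" and qr: "\<And>i. (q i, r i) \<in> edges (G i)"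
    using assms by (auto simp: lim_edges_iff)
  have "(p m, r m) \<in> edges (G m)" for m
  proof (rule ccontr)
    assume pr: "(p m, r m) \<notin> edges (G m)"
    then have "p m \<noteq> q m"
      using qr by auto
    then obtain n c g where n: "m \<le> n" and c: "c \<notin> verts (G m)"
      and g: "epi (G n) (split_edge (G m) (p m) (q m) c) g"
      and fs_g: "\<And>v. v \<in> verts (G n) \<Longrightarrow> fs n m v = (if g v = c then q m else g v)"
      using split_edge_factorization[OF pq] by blast
    let ?H = "edges (split_edge (G m) (p m) (q m) c)"
    have lvl: "fs n m (y n) = y m" "y n \<in> verts (G n)" "y m \<in> verts (G m)" if "y \<in> L" for y
      using that n lim_pts_compat lim_ptsD by auto
    have "c \<noteq> p m" "c \<noteq> q m"
      using c lvl pqr by metis+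
    have "g (p n) = p m"
      using fs_g[of "p n"] lvl[OF pqr(1)] \<open>p m \<noteq> q m\<close> by (auto split: if_splits)
    moreover have "g (q n) = c \<or> g (q n) = q m"
      using fs_g[of "q n"] lvl[OF pqr(2)] by (auto split: if_splits)
    moreover have "(g (p n), g (q n)) \<in> ?H" "(g (q n), g (r n)) \<in> ?H"
      using epi_edge[OF g fin_graph_G] pq qr by blast+
    ultimately have "(c, g (r n)) \<in> ?H"
      using \<open>p m \<noteq> q m\<close> \<open>c \<noteq> p m\<close> \<open>c \<noteq> q m\<close> by (auto simp: edges_split_edge)
    then have "g (r n) \<in> {p m, q m, c}"
      using c edges_G_verts[of c "g (r n)" m] by (auto simp: edges_split_edge)
    then have "r m = p m \<or> r m = q m"
      using fs_g[of "r n"] lvl[OF pqr(3)] by auto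
    then show False
      using pr pq edges_G_refl lvl[OF pqr(1)] by metis
  qed
  then show ?thesis
    using pqr by (simp add: lim_edges_iff)
qed

lemma realize_eq_iff:
  assumes "y \<in> L" "z \<in> L"
  shows "realize G fs y = realize G fs z \<longleftrightarrow> (y, z) \<in> E"
proof
  assume "realize G fs y = realize G fs z"
  then show "(y, z) \<in> E"
    using lim_edges_refl[OF assms(2)] unfolding realize_def by blast
next
  assume "(y, z) \<in> E"
  then show "realize G fs y = realize G fs z"
    unfolding realize_def using lim_edges_sym lim_edges_trans by blast
qed

lemma topspace_lim_top: "topspace (lim_top G fs) = L"
  using lim_ptsD by (auto simp: lim_top_def PiE_iff)

lemma topspace_realization: "topspace (realization G fs) = realize G fs ` L"
  by (simp add: realization_def topspace_quotient_topology topspace_lim_top)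

lemma openin_lim_top_cylinder: "openin (lim_top G fs) {y \<in> L. y m \<in> V}"
proof -
  let ?P = "product_topology (\<lambda>i. discrete_topology (verts (G i))) UNIV"
  have "openin ?P {y \<in> topspace ?P. y m \<in> V \<inter> verts (G m)}"
    by (rule openin_continuous_map_preimage[OF continuous_map_product_projection]) simp_all
  moreover have "{y \<in> L. y m \<in> V} = {y \<in> topspace ?P. y m \<in> V \<inter> verts (G m)} \<inter> L"
    using lim_ptsD by (auto simp: PiE_iff)
  ultimately show ?thesis
    unfolding lim_top_def openin_subtopology by blast
qed

end

section \<open>Branches at a point of weak coherence\<close>

locale weakly_coherent_point = tree_fraisse_sequence +
  fixes x :: "nat \<Rightarrow> nat" and n0 :: nat
  assumes x_lim: "x \<in> lim_pts G fs"
    and coherent: "n0 \<le> m \<Longrightarrow> weak_coh_pt (G (Suc m)) (G m) (fs (Suc m) m) (x m) (x (Suc m))"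
begin

abbreviation punctured :: "nat \<Rightarrow> nat set" where
  "punctured m \<equiv> verts (G m) - {x m}"

abbreviation branches :: "nat \<Rightarrow> nat set set" where
  "branches m \<equiv> comps (G m) (punctured m)"

definition branch_map :: "nat \<Rightarrow> nat set \<Rightarrow> nat set" where
  "branch_map m = (SOME p. inj_on p (branches m) \<and> p ` branches m \<subseteq> branches (Suc m) \<and>
     (\<forall>C\<in>branches m. {v \<in> verts (G (Suc m)). fs (Suc m) m v \<in> C} \<subseteq> p C))"

lemma branch_map:
  assumes "n0 \<le> m"
  shows branch_map_inj: "inj_on (branch_map m) (branches m)"
    and branch_map_branches: "C \<in> branches m \<Longrightarrow> branch_map m C \<in> branches (Suc m)"
    and branch_map_preimage: "C \<in> branches m \<Longrightarrow> v \<in> verts (G (Suc m)) \<Longrightarrow> fs (Suc m) m v \<in> C \<Longrightarrow>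
       v \<in> branch_map m C"
proof -
  have "\<exists>p. inj_on p (branches m) \<and> p ` branches m \<subseteq> branches (Suc m) \<and>
      (\<forall>C\<in>branches m. {v \<in> verts (G (Suc m)). fs (Suc m) m v \<in> C} \<subseteq> p C)"
    using coherent[OF assms] unfolding weak_coh_pt_def by blast
  from someI_ex[OF this] show "inj_on (branch_map m) (branches m)"
    "C \<in> branches m \<Longrightarrow> branch_map m C \<in> branches (Suc m)"
    "C \<in> branches m \<Longrightarrow> v \<in> verts (G (Suc m)) \<Longrightarrow> fs (Suc m) m v \<in> C \<Longrightarrow> v \<in> branch_map m C"
    unfolding branch_map_def[symmetric] by blast+
qed

primrec branch_seq :: "nat set \<Rightarrow> nat \<Rightarrow> nat set" where
  "branch_seq C 0 = C"
| "branch_seq C (Suc j) = branch_map (n0 + j) (branch_seq C j)"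

lemma branch_seq_branches: "C \<in> branches n0 \<Longrightarrow> branch_seq C j \<in> branches (n0 + j)"
  by (induction j) (simp_all add: branch_map_branches)

lemma branch_seq_subset: "C \<in> branches n0 \<Longrightarrow> branch_seq C j \<subseteq> punctured (n0 + j)"
  using branch_seq_branches comps_subset by blast

lemma branch_seq_preimage:
  assumes C: "C \<in> branches n0" and "j \<le> j'"
  shows "v \<in> verts (G (n0 + j')) \<Longrightarrow> fs (n0 + j') (n0 + j) v \<in> branch_seq C j \<Longrightarrow> v \<in> branch_seq C j'"
  using \<open>j \<le> j'\<close>
proof (induction j' arbitrary: v rule: dec_induct)
  case base
  then show ?case
    using fs_id by simp
next
  case (step j')
  let ?w = "fs (Suc (n0 + j')) (n0 + j') v"
  have "?w \<in> verts (G (n0 + j'))" "fs (n0 + j') (n0 + j) ?w = fs (n0 + Suc j') (n0 + j) v"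
    using step.hyps step.prems(1) fs_verts fs_comp by auto
  then have "?w \<in> branch_seq C j'"
    using step.IH step.prems(2) by simp
  then show ?case
    using branch_map_preimage[OF _ branch_seq_branches[OF C]] step.prems(1) by simp
qed

lemma branch_seq_image_step:
  assumes C: "C \<in> branches n0" and v: "v \<in> branch_seq C (Suc j)"
  shows "fs (Suc (n0 + j)) (n0 + j) v \<in> insert (x (n0 + j)) (branch_seq C j)"
proof (rule ccontr)
  let ?w = "fs (Suc (n0 + j)) (n0 + j) v"
  assume w: "?w \<notin> insert (x (n0 + j)) (branch_seq C j)"
  have "v \<in> verts (G (Suc (n0 + j)))"
    using branch_seq_subset[OF C, of "Suc j"] v by auto
  then have "?w \<in> punctured (n0 + j)"
    using fs_verts w by auto
  then obtain D where D: "D \<in> branches (n0 + j)" "?w \<in> D"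
    by (rule comps_cover)
  have "v \<in> branch_map (n0 + j) D" "branch_map (n0 + j) D \<in> branches (Suc (n0 + j))"
    using branch_map_preimage[OF _ D(1)] branch_map_branches[OF _ D(1)]
      \<open>v \<in> verts (G (Suc (n0 + j)))\<close> D(2) by simp_all
  then have "branch_map (n0 + j) D = branch_map (n0 + j) (branch_seq C j)"
    using comps_disjoint branch_seq_branches[OF C, of "Suc j"] v by simp
  then have "D = branch_seq C j"
    using branch_map_inj[of "n0 + j"] D(1) branch_seq_branches[OF C, of j] by (simp add: inj_on_def)
  then show False
    using w D(2) by blast
qed

lemma branch_seq_image:
  assumes C: "C \<in> branches n0" and "j \<le> j'"
  shows "v \<in> branch_seq C j' \<Longrightarrow> fs (n0 + j') (n0 + j) v \<in> insert (x (n0 + j)) (branch_seq C j)"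
  using \<open>j \<le> j'\<close>
proof (induction j' arbitrary: v rule: dec_induct)
  case base
  then show ?case
    using fs_id branch_seq_subset[OF C, of j] by auto
next
  case (step j')
  let ?w = "fs (n0 + Suc j') (n0 + j') v"
  have "v \<in> verts (G (n0 + Suc j'))"
    using branch_seq_subset[OF C, of "Suc j'"] step.prems by auto
  then have "fs (n0 + j') (n0 + j) ?w = fs (n0 + Suc j') (n0 + j) v"
    using fs_comp step.hyps by simp
  moreover have "?w \<in> insert (x (n0 + j')) (branch_seq C j')"
    using branch_seq_image_step[OF C step.prems] by simp
  moreover have "fs (n0 + j') (n0 + j) (x (n0 + j')) = x (n0 + j)"
    using lim_pts_compat[OF x_lim] step.hyps by simp
  ultimately show ?case
    using step.IH[of ?w] by auto
qed

lemma branch_seq_disjoint: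
  assumes C: "C \<in> branches n0" and D: "D \<in> branches n0" and "C \<noteq> D"
  shows "branch_seq C j \<inter> branch_seq D j = {}"
proof -
  have "branch_seq C j \<noteq> branch_seq D j"
  proof (induction j)
    case 0
    then show ?case
      using \<open>C \<noteq> D\<close> by simp
  next
    case (Suc j)
    then show ?case
      using branch_map_inj[of "n0 + j"] branch_seq_branches[OF C, of j] branch_seq_branches[OF D, of j]
      by (auto simp: inj_on_def)
  qed
  then show ?thesis
    using comps_disjoint branch_seq_branches[OF C, of j] branch_seq_branches[OF D, of j] by blast
qed

text \<open>
  A branch system picks at every level n0 + j a set closed under adjacency in the punctured
  tree, coherently under preimages; its branch points are the points of the limit that leave
  the star of x through it. Their images are the branches of the dendrite at the image of x.
\<close>

definition branch_system :: "(nat \<Rightarrow> nat set) \<Rightarrow> bool" where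
  "branch_system T \<longleftrightarrow>
     (\<forall>j u v. u \<in> T j \<longrightarrow> v \<in> punctured (n0 + j) \<longrightarrow> (u, v) \<in> edges (G (n0 + j)) \<longrightarrow> v \<in> T j) \<and>
     (\<forall>j j' v. j \<le> j' \<longrightarrow> v \<in> punctured (n0 + j') \<longrightarrow> fs (n0 + j') (n0 + j) v \<in> T j \<longrightarrow> v \<in> T j')"

definition branch_points :: "(nat \<Rightarrow> nat set) \<Rightarrow> (nat \<Rightarrow> nat) set" where
  "branch_points T = {y \<in> L. \<exists>j. y (n0 + j) \<in> T j \<and> (x (n0 + j), y (n0 + j)) \<notin> edges (G (n0 + j))}"

lemma branch_systemD:
  assumes "branch_system T"
  shows "u \<in> T j \<Longrightarrow> v \<in> punctured (n0 + j) \<Longrightarrow> (u, v) \<in> edges (G (n0 + j)) \<Longrightarrow> v \<in> T j"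
    and "j \<le> j' \<Longrightarrow> v \<in> punctured (n0 + j') \<Longrightarrow> fs (n0 + j') (n0 + j) v \<in> T j \<Longrightarrow> v \<in> T j'"
  using assms unfolding branch_system_def by blast+

lemma non_edge_punctured:
  assumes "y \<in> L" "(x m, y m) \<notin> edges (G m)"
  shows "y m \<in> punctured m"
proof -
  have "y m \<noteq> x m"
    using assms(2) edges_G_refl[OF lim_ptsD[OF x_lim]] by metis
  then show ?thesis
    using lim_ptsD[OF assms(1)] by blast
qed

lemma lim_pts_detached:
  assumes "y \<in> L" "(x, y) \<notin> E"
  obtains j where "(x (n0 + j), y (n0 + j)) \<notin> edges (G (n0 + j))"
proof -
  obtain i where "(x i, y i) \<notin> edges (G i)"
    using assms x_lim by (auto simp: lim_edges_iff)
  then have "(x (n0 + i), y (n0 + i)) \<notin> edges (G (n0 + i))"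
    using lim_pts_non_edge_mono[OF x_lim assms(1), of i "n0 + i"] by simp
  then show ?thesis
    using that by blast
qed

lemma branch_points_later:
  assumes T: "branch_system T" and y: "y \<in> L" and "j \<le> j'"
    and yT: "y (n0 + j) \<in> T j" and ne: "(x (n0 + j), y (n0 + j)) \<notin> edges (G (n0 + j))"
  shows "y (n0 + j') \<in> T j' \<and> (x (n0 + j'), y (n0 + j')) \<notin> edges (G (n0 + j'))"
proof -
  have ne': "(x (n0 + j'), y (n0 + j')) \<notin> edges (G (n0 + j'))"
    using lim_pts_non_edge_mono[OF x_lim y _ ne] \<open>j \<le> j'\<close> by simp
  moreover have "fs (n0 + j') (n0 + j) (y (n0 + j')) = y (n0 + j)"
    using lim_pts_compat[OF y] \<open>j \<le> j'\<close> by simp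
  ultimately show ?thesis
    using branch_systemD(2)[OF T \<open>j \<le> j'\<close> non_edge_punctured[OF y ne']] yT by simp
qed

lemma branch_points_subset: "branch_points T \<subseteq> L"
  unfolding branch_points_def by blast

lemma branch_points_not_edge: "z \<in> branch_points T \<Longrightarrow> (x, z) \<notin> E"
  unfolding branch_points_def lim_edges_iff by blast

lemma branch_points_saturated:
  assumes T: "branch_system T" and z: "z \<in> branch_points T" and yz: "(y, z) \<in> E"
  shows "y \<in> branch_points T"
proof -
  have y: "y \<in> L" and zy: "\<And>i. (z i, y i) \<in> edges (G i)"
    using yz by (auto simp: lim_edges_iff edges_G_sym)
  have "(x, y) \<notin> E"
    using z yz lim_edges_trans branch_points_not_edge by blast
  then obtain i where i: "(x (n0 + i), y (n0 + i)) \<notin> edges (G (n0 + i))"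
    using lim_pts_detached[OF y] by blast
  obtain j where j: "z (n0 + j) \<in> T j" "(x (n0 + j), z (n0 + j)) \<notin> edges (G (n0 + j))"
    using z unfolding branch_points_def by blast
  have "z \<in> L"
    using z branch_points_subset by blast
  then have "z (n0 + (i + j)) \<in> T (i + j)"
    using branch_points_later[of T z j "i + j"] T j by simp
  moreover have ne: "(x (n0 + (i + j)), y (n0 + (i + j))) \<notin> edges (G (n0 + (i + j)))"
    using lim_pts_non_edge_mono[OF x_lim y _ i] by simp
  ultimately have "y (n0 + (i + j)) \<in> T (i + j)"
    using branch_systemD(1)[OF T _ non_edge_punctured[OF y ne] zy] by blast
  then show ?thesis
    using y ne unfolding branch_points_def by blast
qed

lemma branch_points_disjoint:
  assumes "branch_system T" "branch_system T'" "\<And>j. T j \<inter> T' j = {}"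
  shows "branch_points T \<inter> branch_points T' = {}"
proof -
  have False if y: "y \<in> branch_points T" "y \<in> branch_points T'" for y
  proof -
    obtain j j' where
      j: "y (n0 + j) \<in> T j" "(x (n0 + j), y (n0 + j)) \<notin> edges (G (n0 + j))" and
      j': "y (n0 + j') \<in> T' j'" "(x (n0 + j'), y (n0 + j')) \<notin> edges (G (n0 + j'))"
      using y unfolding branch_points_def by blast
    have "y \<in> L"
      using y branch_points_subset by blast
    then have "y (n0 + (j + j')) \<in> T (j + j')" "y (n0 + (j + j')) \<in> T' (j + j')"
      using branch_points_later[of T y j "j + j'"] branch_points_later[of T' y j' "j + j'"]
        assms(1,2) j j' by simp_all
    then show False
      using assms(3) by blast
  qed
  then show ?thesis
    by blast
qed

lemma openin_branch_points: "openin (lim_top G fs) (branch_points T)"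
proof -
  let ?U = "\<lambda>j. {y \<in> L. y (n0 + j) \<in> {v \<in> T j. (x (n0 + j), v) \<notin> edges (G (n0 + j))}}"
  have "openin (lim_top G fs) (\<Union>j. ?U j)"
    using openin_lim_top_cylinder by (intro openin_Union) blast
  moreover have "branch_points T = (\<Union>j. ?U j)"
    unfolding branch_points_def by blast
  ultimately show ?thesis
    by simp
qed

lemma realize_preimage_branch_points:
  assumes "branch_system T"
  shows "{y \<in> L. realize G fs y \<in> realize G fs ` branch_points T} = branch_points T"
proof -
  have "y \<in> branch_points T" if "y \<in> L" "z \<in> branch_points T" "realize G fs y = realize G fs z" for y z
    using that realize_eq_iff branch_points_subset branch_points_saturated[OF assms] by blast
  then show ?thesis
    using branch_points_subset by blast
qed

lemma openin_realization_branch_points: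
  assumes "branch_system T"
  shows "openin (realization G fs) (realize G fs ` branch_points T)"
  unfolding realization_def openin_quotient_topology topspace_lim_top
    realize_preimage_branch_points[OF assms]
  using branch_points_subset openin_branch_points by blast

lemma realize_x_notin_branch_points: "realize G fs x \<notin> realize G fs ` branch_points T"
  using realize_eq_iff[OF x_lim] branch_points_subset branch_points_not_edge by blast

lemma realize_branch_points_disjoint:
  assumes "branch_system T" "branch_system T'" "\<And>j. T j \<inter> T' j = {}"
  shows "realize G fs ` branch_points T \<inter> realize G fs ` branch_points T' = {}"
  using realize_preimage_branch_points[OF assms(1)] branch_points_disjoint[OF assms]
    branch_points_subset by blast

lemma branch_system_branch_seq:
  assumes C: "C \<in> branches n0"
  shows "branch_system (branch_seq C)"
  unfolding branch_system_def
proof (intro conjI allI impI)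
  fix j u v
  assume "u \<in> branch_seq C j" "v \<in> punctured (n0 + j)" "(u, v) \<in> edges (G (n0 + j))"
  then show "v \<in> branch_seq C j"
    using comps_edge_closed[OF branch_seq_branches[OF C]] edges_G_sym by blast
qed (use branch_seq_preimage[OF C] in blast)

lemma branch_system_complement:
  assumes C0: "C0 \<in> branches n0" and C1: "C1 \<in> branches n0"
  shows "branch_system (\<lambda>j. punctured (n0 + j) - branch_seq C0 j - branch_seq C1 j)"
  unfolding branch_system_def
proof (intro conjI allI impI)
  fix j u v
  assume "u \<in> punctured (n0 + j) - branch_seq C0 j - branch_seq C1 j" "v \<in> punctured (n0 + j)"
    "(u, v) \<in> edges (G (n0 + j))"
  then show "v \<in> punctured (n0 + j) - branch_seq C0 j - branch_seq C1 j"
    using comps_edge_closed[OF branch_seq_branches[OF C0]] comps_edge_closed[OF branch_seq_branches[OF C1]]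
      edges_G_sym by blast
next
  fix j j' v
  assume "j \<le> j'" "v \<in> punctured (n0 + j')"
    "fs (n0 + j') (n0 + j) v \<in> punctured (n0 + j) - branch_seq C0 j - branch_seq C1 j"
  then show "v \<in> punctured (n0 + j') - branch_seq C0 j' - branch_seq C1 j'"
    using branch_seq_image[OF C0] branch_seq_image[OF C1] by blast
qed

lemma branch_points_branch_seq_nonempty:
  assumes C: "C \<in> branches n0" and u: "u \<in> C" "(x n0, u) \<in> edges (G n0)"
  shows "branch_points (branch_seq C) \<noteq> {}"
proof -
  have "x n0 \<noteq> u"
    using u(1) comps_subset[OF C] by blast
  obtain n v where n: "n0 \<le> n" and v: "v \<in> verts (G n)" "fs n n0 v = u"
    and detached: "\<And>w. w \<in> verts (G n) \<Longrightarrow> fs n n0 w = x n0 \<Longrightarrow> (w, v) \<notin> edges (G n)"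
    using split_edge_detached_lift[OF u(2) \<open>x n0 \<noteq> u\<close>] by blast
  obtain y where y: "y \<in> L" "y n = v"
    by (rule lim_pts_through_vertex[OF v(1)])
  have level: "n0 + (n - n0) = n"
    using n by simp
  have "(x n, y n) \<notin> edges (G n)"
    using detached[OF lim_ptsD[OF x_lim] lim_pts_compat[OF x_lim n]] y(2) by simp
  moreover have "y n \<in> branch_seq C (n - n0)"
    using branch_seq_preimage[OF C, of 0 "n - n0" v] v u(1) y(2) level by simp
  ultimately have "y \<in> branch_points (branch_seq C)"
    unfolding branch_points_def using y(1) level by (auto intro!: exI[of _ "n - n0"])
  then show ?thesis
    by blast
qed

lemma realize_branch_points_cover:
  assumes cover: "\<And>j. punctured (n0 + j) \<subseteq> T0 j \<union> T1 j \<union> T2 j"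
  shows "topspace (realization G fs) - {realize G fs x} =
    realize G fs ` branch_points T0 \<union> realize G fs ` branch_points T1 \<union> realize G fs ` branch_points T2"
proof -
  let ?U = "\<lambda>T. realize G fs ` branch_points T"
  have covered: "y \<in> branch_points T0 \<union> branch_points T1 \<union> branch_points T2"
    if y: "y \<in> L" "(x, y) \<notin> E" for y
  proof -
    obtain j where j: "(x (n0 + j), y (n0 + j)) \<notin> edges (G (n0 + j))"
      using lim_pts_detached[OF y] by blast
    then have "y (n0 + j) \<in> T0 j \<union> T1 j \<union> T2 j"
      using cover non_edge_punctured[OF y(1) j] by blast
    then show ?thesis
      using y(1) j unfolding branch_points_def by blast
  qed
  have "p \<in> ?U T0 \<union> ?U T1 \<union> ?U T2"
    if p: "p \<in> topspace (realization G fs) - {realize G fs x}" for p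
  proof -
    obtain y where y: "y \<in> L" "p = realize G fs y"
      using p by (auto simp: topspace_realization)
    then have "(x, y) \<notin> E"
      using p realize_eq_iff[OF x_lim y(1)] by auto
    then show ?thesis
      using covered y by blast
  qed
  moreover have "?U T \<subseteq> topspace (realization G fs) - {realize G fs x}" for T
    using realize_x_notin_branch_points[of T] branch_points_subset[of T]
    by (auto simp: topspace_realization)
  ultimately show ?thesis
    by blast
qed

lemma ramification_point_of_branch_systems:
  assumes sys: "branch_system T0" "branch_system T1" "branch_system T2"
    and disj: "\<And>j. T0 j \<inter> T1 j = {}" "\<And>j. T0 j \<inter> T2 j = {}" "\<And>j. T1 j \<inter> T2 j = {}"
    and cover: "\<And>j. punctured (n0 + j) \<subseteq> T0 j \<union> T1 j \<union> T2 j"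
    and ne: "branch_points T0 \<noteq> {}" "branch_points T1 \<noteq> {}" "branch_points T2 \<noteq> {}"
  shows "ramification_point (realization G fs) (realize G fs x)"
proof (rule ramification_point_of_open_partition[where U = "realize G fs ` branch_points T0"
      and V = "realize G fs ` branch_points T1" and W = "realize G fs ` branch_points T2"])
  show "realize G fs x \<in> topspace (realization G fs)"
    using x_lim by (simp add: topspace_realization)
qed (use sys disj ne openin_realization_branch_points realize_branch_points_disjoint
      realize_branch_points_cover[OF cover] in simp_all)

theorem ramification_point_realize: "ramification_point (realization G fs) (realize G fs x)"
proof -
  have "3 \<le> ord (G n0) (x n0)"
    using coherent[of n0] unfolding weak_coh_pt_def by simp
  then obtain C0 C1 C2 u0 u1 u2 where C: "C0 \<in> branches n0" "C1 \<in> branches n0" "C2 \<in> branches n0"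
    and distinct: "C0 \<noteq> C1" "C0 \<noteq> C2" "C1 \<noteq> C2"
    and u: "u0 \<in> C0" "u1 \<in> C1" "u2 \<in> C2"
      "(x n0, u0) \<in> edges (G n0)" "(x n0, u1) \<in> edges (G n0)" "(x n0, u2) \<in> edges (G n0)"
    by (rule fin_tree_three_comps[OF fin_tree_G])
  define rest where "rest j = punctured (n0 + j) - branch_seq C0 j - branch_seq C1 j" for j
  have "branch_seq C2 j \<subseteq> rest j" for j
    using branch_seq_subset[OF C(3)] branch_seq_disjoint[OF C(1,3) distinct(2)]
      branch_seq_disjoint[OF C(2,3) distinct(3)] unfolding rest_def by blast
  then have "branch_points (branch_seq C2) \<subseteq> branch_points rest"
    unfolding branch_points_def by blast
  then have "branch_points rest \<noteq> {}"
    using branch_points_branch_seq_nonempty[OF C(3) u(3,6)] by blast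
  then show ?thesis
  proof (rule ramification_point_of_branch_systems[of "branch_seq C0" "branch_seq C1" rest, rotated -1])
    show "branch_system (branch_seq C0)" "branch_system (branch_seq C1)"
      using branch_system_branch_seq C(1,2) by blast+
    show "branch_system rest"
      unfolding rest_def by (rule branch_system_complement[OF C(1,2)])
    show "branch_seq C0 j \<inter> branch_seq C1 j = {}" for j
      using branch_seq_disjoint[OF C(1,2) distinct(1)] .
    show "branch_seq C0 j \<inter> rest j = {}" "branch_seq C1 j \<inter> rest j = {}"
      "punctured (n0 + j) \<subseteq> branch_seq C0 j \<union> branch_seq C1 j \<union> rest j" for j
      by (auto simp: rest_def)
    show "branch_points (branch_seq C0) \<noteq> {}" "branch_points (branch_seq C1) \<noteq> {}"
      using branch_points_branch_seq_nonempty C(1,2) u(1,2,4,5) by blast+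
  qed
qed

end

theorem mainTheorem3:
  assumes fam: "proj_fraisse_family \<F>"
    and trees: "\<forall>T\<in>fst \<F>. fin_tree T"
    and mono: "\<forall>B A f. distg \<F> B A f \<longrightarrow> monotone_epi B A f"
    and split: "allows_splitting_edges \<F>"
    and seq: "fraisse_sequence \<F> G fs"
    and wc: "weak_coh_lim G fs x"
  shows "ramification_point (realization G fs) (realize G fs x)"
proof -
  obtain k where k: "\<forall>l>k. weak_coh_pt (G (Suc l)) (G l) (fs (Suc l) l) (x l) (x (Suc l))"
    using wc unfolding weak_coh_lim_def by blast
  have "weakly_coherent_point \<F> G fs x (Suc k)"
    using fam trees split seq wc k
    by unfold_locales (auto simp: weak_coh_lim_def Suc_le_eq)
  then show ?thesis
    by (rule weakly_coherent_point.ramification_point_realize)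
qed

end
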